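(* For all integers $k\ge n\ge1$, the transition matrix $\bar K$ of the Burnside process on $\Pi_n$ satisfies $$\bar K(x,y)\ge\frac{1}{(n+1)^{n-1}}\quad\text{for all }x,y\in\Pi_n.$$
   Context: $S_k$ acts on $[k]^n$ by $\sigma(u_1,\dots,u_n)=(\sigma(u_1),\dots,\sigma(u_n))$. The Burnside process on $[k]^n$: from $u$, choose $\sigma$ uniformly among permutations of $[k]$ fixing every value appearing in $u$, then choose each coordinate of the new state independently and uniformly among the fixed points of $\sigma$. $\Pi_n$ is the set of set partitions of $[n]$; the partition of $u$ puts $i,j$ in the same block iff $u_i=u_j$, and the orbits of the action are the sets of vectors with a given partition. The Burnside process on $\Pi_n$ is the lumped chain: $\bar K(x,y)$ is the probability that one step of the Burnside process on $[k]^n$ started from any $u$ with partition $x$ lands on a vector with partition $y$. *)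

theory Defs
  imports Complex_Main "HOL-Library.Disjoint_Sets" "HOL-Library.FuncSet" "HOL-Combinatorics.Permutations"
begin

text \<open>[n] is modelled as {0..<n}, [k] as {0..<k}. Vectors in [k]^n are extensional
functions from {0..<n} to {0..<k} (PiE).\<close>

definition vecs :: "nat \<Rightarrow> nat \<Rightarrow> (nat \<Rightarrow> nat) set" where
  "vecs k n = {0..<n} \<rightarrow>\<^sub>E {0..<k}"

definition setparts :: "nat \<Rightarrow> nat set set set" where
  "setparts n = {P. partition_on {0..<n} P}"

definition part_of :: "nat \<Rightarrow> (nat \<Rightarrow> nat) \<Rightarrow> nat set set" where
  "part_of n u = (\<lambda>i. {j \<in> {0..<n}. u j = u i}) ` {0..<n}"

definition stab :: "nat \<Rightarrow> nat \<Rightarrow> (nat \<Rightarrow> nat) \<Rightarrow> (nat \<Rightarrow> nat) set" where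
  "stab k n u = {\<sigma>. \<sigma> permutes {0..<k} \<and> (\<forall>i\<in>{0..<n}. \<sigma> (u i) = u i)}"

definition fixpts :: "nat \<Rightarrow> (nat \<Rightarrow> nat) \<Rightarrow> nat set" where
  "fixpts k \<sigma> = {a \<in> {0..<k}. \<sigma> a = a}"

text \<open>One step of the Burnside process on [k]^n: choose \<sigma> uniformly in stab,
 then each coordinate independently uniform in the fixed points of \<sigma>.\<close>
definition burnside_K :: "nat \<Rightarrow> nat \<Rightarrow> (nat \<Rightarrow> nat) \<Rightarrow> (nat \<Rightarrow> nat) \<Rightarrow> real" where
  "burnside_K k n u w =
     (\<Sum>\<sigma>\<in>stab k n u. (1 / real (card (stab k n u))) *
        (\<Prod>i\<in>{0..<n}. (if w i \<in> fixpts k \<sigma> then 1 / real (card (fixpts k \<sigma>)) else 0)))"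

text \<open>Lumped chain on set partitions, started from (any, here a chosen) vector with partition x.\<close>
definition burnside_Kbar :: "nat \<Rightarrow> nat \<Rightarrow> nat set set \<Rightarrow> nat set set \<Rightarrow> real" where
  "burnside_Kbar k n x y =
     (let u = (SOME u. u \<in> vecs k n \<and> part_of n u = x)
      in \<Sum>w\<in>{w \<in> vecs k n. part_of n w = y}. burnside_K k n u w)"

end

theory Submission
  imports Defs
begin

(* Let b and c be the numbers of blocks of x and y, and j = c - b (truncated). The stabiliser of
   a vector u with partition x consists of the (k - b)! permutations of the values not taken by u.
   A permutation with m fixed points, the b values of u among them, moves u to partition y with
   probability at least m (m - 1) ... (m - c + 1) / m^n >= j! C(m - b, j) / m^(n-1).
   Counting the pairs (sigma, T) with T a j-set of fixed points of sigma outside the values of u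
   turns the average of this bound over sigma into averages of 1 / m^(n-1) over the permutations
   of the remaining k - b - j values. These have on average at most one fixed point, so m is at
   most b + j + 1 on average, and by convexity of 1 / x^(n-1) the average is at least
   1 / (b + j + 1)^(n-1) >= 1 / (n + 1)^(n-1). *)

lemma permutes_fixing_eq:
  assumes "B \<subseteq> A"
  shows "{\<sigma>. \<sigma> permutes A \<and> (\<forall>b\<in>B. \<sigma> b = b)} = {\<sigma>. \<sigma> permutes (A - B)}"
proof (intro set_eqI iffI; simp)
  fix \<sigma> assume "\<sigma> permutes A \<and> (\<forall>b\<in>B. \<sigma> b = b)"
  then show "\<sigma> permutes (A - B)"
    unfolding permutes_def by blast
next
  fix \<sigma> assume \<sigma>: "\<sigma> permutes (A - B)"
  show "\<sigma> permutes A \<and> (\<forall>b\<in>B. \<sigma> b = b)"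
    using permutes_subset[OF \<sigma>] permutes_not_in[OF \<sigma>] by auto
qed

lemma card_permutes_fixing_point:
  assumes "finite S"
  shows "card {\<sigma>. \<sigma> permutes S \<and> \<sigma> a = a} = (if a \<in> S then fact (card S - 1) else fact (card S))"
proof (cases "a \<in> S")
  case True
  then have "{\<sigma>. \<sigma> permutes S \<and> \<sigma> a = a} = {\<sigma>. \<sigma> permutes (S - {a})}"
    using permutes_fixing_eq[of "{a}" S] by auto
  then show ?thesis
    using True assms card_permutations[of "S - {a}"] by simp
next
  case False
  then have "{\<sigma>. \<sigma> permutes S \<and> \<sigma> a = a} = {\<sigma>. \<sigma> permutes S}"
    using permutes_not_in by fastforce
  then show ?thesis
    using False assms card_permutations by simp
qed

lemma sum_card_fixpoints_permutes_le:
  assumes "finite A" "S \<subseteq> A"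
  shows "(\<Sum>\<sigma> | \<sigma> permutes S. card {a\<in>A. \<sigma> a = a}) \<le> (card A - card S + 1) * fact (card S)"
proof -
  have fin_S: "finite S" using assms finite_subset by blast
  have "(\<Sum>\<sigma> | \<sigma> permutes S. card {a\<in>A. \<sigma> a = a})
      = (\<Sum>\<sigma> | \<sigma> permutes S. \<Sum>a\<in>A. if \<sigma> a = a then 1 else 0)"
    using assms(1) by (simp add: sum.If_cases Int_def)
  also have "\<dots> = (\<Sum>a\<in>A. card {\<sigma>. \<sigma> permutes S \<and> \<sigma> a = a})"
    using fin_S by (subst sum.swap) (simp add: sum.If_cases Int_def conj_commute finite_permutations)
  also have "\<dots> = (\<Sum>a\<in>A - S. fact (card S)) + (\<Sum>a\<in>S. fact (card S - 1))"
    using assms fin_S by (simp add: card_permutes_fixing_point sum.If_cases Int_absorb1 Diff_eq)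
  also have "\<dots> = (card A - card S) * fact (card S) + card S * fact (card S - 1)"
    using assms fin_S by (simp add: card_Diff_subset)
  also have "card S * fact (card S - 1) \<le> fact (card S)"
    by (cases "card S") auto
  finally show ?thesis by (simp add: algebra_simps)
qed

lemma sum_permutes_card_fixed_subsets:
  fixes h :: "('a \<Rightarrow> 'a) \<Rightarrow> real"
  assumes "finite S" "\<T> \<subseteq> Pow S"
  shows "(\<Sum>\<sigma> | \<sigma> permutes S. card {T\<in>\<T>. \<forall>t\<in>T. \<sigma> t = t} * h \<sigma>)
           = (\<Sum>T\<in>\<T>. \<Sum>\<sigma> | \<sigma> permutes (S - T). h \<sigma>)"
proof -
  have "finite \<T>" using assms finite_subset by blast
  then have "(\<Sum>\<sigma> | \<sigma> permutes S. card {T\<in>\<T>. \<forall>t\<in>T. \<sigma> t = t} * h \<sigma>)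
      = (\<Sum>\<sigma> | \<sigma> permutes S. \<Sum>T\<in>{T\<in>\<T>. \<forall>t\<in>T. \<sigma> t = t}. h \<sigma>)"
    by simp
  also have "\<dots> = (\<Sum>T\<in>\<T>. \<Sum>\<sigma> | \<sigma> permutes S \<and> (\<forall>t\<in>T. \<sigma> t = t). h \<sigma>)"
    using assms(1) \<open>finite \<T>\<close> by (subst sum.swap_restrict) (simp_all add: finite_permutations)
  also have "\<dots> = (\<Sum>T\<in>\<T>. \<Sum>\<sigma> | \<sigma> permutes (S - T). h \<sigma>)"
    using assms(2) permutes_fixing_eq by (intro sum.cong) blast+
  finally show ?thesis .
qed

lemma inverse_power_ge_tangent:
  fixes x a :: real
  assumes "x > 0" "a > 0"
  shows "(1 + real p - real p * x / a) / a ^ p \<le> 1 / x ^ p"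
proof -
  define t where "t = a / x"
  have t: "t > 0" using assms by (simp add: t_def)
  have "1 + real p * (t - 1) \<le> t ^ p"
    using Bernoulli_inequality[of "t - 1" p] t by simp
  moreover have "1 - 1 / t \<le> t - 1"
    using t zero_le_power2[of "t - 1"] by (simp add: field_simps power2_eq_square)
  then have "real p * (1 - 1 / t) \<le> real p * (t - 1)"
    by (rule mult_left_mono) simp
  ultimately have "1 + real p - real p * x / a \<le> t ^ p"
    using assms by (simp add: t_def right_diff_distrib)
  also have "t ^ p = a ^ p / x ^ p" by (simp add: t_def power_divide)
  finally show ?thesis using assms by (simp add: divide_simps mult.commute)
qed

lemma card_div_power_le_sum_inverse_power:
  fixes x :: "'i \<Rightarrow> real" and a :: real
  assumes "finite I" "\<And>i. i \<in> I \<Longrightarrow> x i > 0" "sum x I \<le> card I * a" "a > 0"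
  shows "card I / a ^ p \<le> (\<Sum>i\<in>I. 1 / x i ^ p)"
proof -
  have "card I \<le> card I * (1 + real p) - real p * sum x I / a"
    using assms(3,4) mult_left_mono[of "sum x I / a" "card I" "real p"]
    by (simp add: pos_divide_le_eq algebra_simps)
  then have "card I / a ^ p \<le> (card I * (1 + real p) - real p * sum x I / a) / a ^ p"
    using assms(4) by (simp add: divide_right_mono)
  also have "\<dots> = (\<Sum>i\<in>I. (1 + real p - real p * x i / a) / a ^ p)"
    by (simp add: sum_divide_distrib[symmetric] sum_subtractf sum_distrib_left[symmetric] algebra_simps)
  also have "\<dots> \<le> (\<Sum>i\<in>I. 1 / x i ^ p)"
    using assms inverse_power_ge_tangent by (intro sum_mono) auto
  finally show ?thesis .
qed

lemma fact_div_power_le_sum_permutes_inverse_power: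
  assumes "finite A" "S \<subset> A"
  shows "fact (card S) / real (card A - card S + 1) ^ p
           \<le> (\<Sum>\<sigma> | \<sigma> permutes S. 1 / real (card {a\<in>A. \<sigma> a = a}) ^ p)"
proof -
  have fin_S: "finite S" using assms finite_subset by blast
  have "card {a\<in>A. \<sigma> a = a} > 0" if "\<sigma> permutes S" for \<sigma>
  proof -
    obtain a where "a \<in> A - S" using assms(2) by blast
    then have "a \<in> {a\<in>A. \<sigma> a = a}" using permutes_not_in[OF that] by simp
    then show ?thesis using assms(1) card_gt_0_iff by fastforce
  qed
  moreover have "(\<Sum>\<sigma> | \<sigma> permutes S. card {a\<in>A. \<sigma> a = a})
      \<le> card {\<sigma>. \<sigma> permutes S} * (card A - card S + 1)"
    using sum_card_fixpoints_permutes_le[OF assms(1) psubset_imp_subset[OF assms(2)]] fin_S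
    by (simp add: card_permutations mult.commute)
  then have "(\<Sum>\<sigma> | \<sigma> permutes S. real (card {a\<in>A. \<sigma> a = a}))
      \<le> card {\<sigma>. \<sigma> permutes S} * real (card A - card S + 1)"
    unfolding of_nat_sum[symmetric] of_nat_mult[symmetric] of_nat_le_iff .
  ultimately show ?thesis
    using card_div_power_le_sum_inverse_power[of "{\<sigma>. \<sigma> permutes S}"] fin_S
    by (simp add: finite_permutations card_permutations)
qed

lemma card_fixed_subsets_eq_choose:
  assumes "finite A" "B \<subseteq> A" "\<sigma> permutes A - B"
  shows "card {T. T \<subseteq> A - B \<and> card T = j \<and> (\<forall>t\<in>T. \<sigma> t = t)}
           = (card {a\<in>A. \<sigma> a = a} - card B) choose j"
proof -
  have "B \<subseteq> {a\<in>A. \<sigma> a = a}"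
    using assms(2) permutes_not_in[OF assms(3)] by fastforce
  moreover have "{T. T \<subseteq> A - B \<and> card T = j \<and> (\<forall>t\<in>T. \<sigma> t = t)}
      = {T. T \<subseteq> {a\<in>A. \<sigma> a = a} - B \<and> card T = j}"
    by auto
  ultimately show ?thesis
    using assms(1) n_subsets[of "{a\<in>A. \<sigma> a = a} - B" j] by (simp add: card_Diff_subset finite_subset)
qed

lemma permutes_average_choose_fixpoints_ge:
  assumes "finite A" "B \<subseteq> A" "B \<noteq> {}" "j \<le> card (A - B)"
  shows "1 / real (card B + j + 1) ^ p
           \<le> (\<Sum>\<sigma> | \<sigma> permutes (A - B).
                 fact j * real ((card {a\<in>A. \<sigma> a = a} - card B) choose j)
                   / real (card {a\<in>A. \<sigma> a = a}) ^ p) / fact (card (A - B))"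
proof -
  define S where "S = A - B"
  define \<T> where "\<T> = {T. T \<subseteq> S \<and> card T = j}"
  define h where "h = (\<lambda>\<sigma>. 1 / real (card {a\<in>A. \<sigma> a = a}) ^ p)"
  have fin_S: "finite S" using assms(1) by (simp add: S_def)
  have choose_eq: "(card {a\<in>A. \<sigma> a = a} - card B) choose j = card {T\<in>\<T>. \<forall>t\<in>T. \<sigma> t = t}"
    if "\<sigma> permutes S" for \<sigma>
    using card_fixed_subsets_eq_choose[OF assms(1,2), of \<sigma> j] that by (simp add: \<T>_def S_def)
  have inner: "fact (card S - j) / real (card B + j + 1) ^ p \<le> (\<Sum>\<sigma> | \<sigma> permutes (S - T). h \<sigma>)"
    if "T \<in> \<T>" for T
  proof -
    have "S - T \<subset> A" "card (S - T) = card S - j"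
      using that assms(2,3) fin_S by (auto simp: \<T>_def S_def card_Diff_subset finite_subset)
    moreover have "card A - (card S - j) + 1 = card B + j + 1"
      using assms card_mono[OF assms(1,2)] by (simp add: S_def card_Diff_subset finite_subset)
    ultimately show ?thesis
      using fact_div_power_le_sum_permutes_inverse_power[OF assms(1), of "S - T" p]
      by (simp add: h_def)
  qed
  have card_\<T>: "card \<T> = card S choose j"
    using n_subsets[OF fin_S] by (simp add: \<T>_def)
  have fact_eq: "fact j * fact (card S - j) * real (card S choose j) = (fact (card S) :: real)"
    using binomial_fact_lemma[of j "card S"] assms(4) unfolding S_def by (metis of_nat_fact of_nat_mult)
  then have "fact (card S) / real (card B + j + 1) ^ p
      = fact j * (card \<T> * (fact (card S - j) / real (card B + j + 1) ^ p))"
    unfolding card_\<T> by (simp add: mult_ac flip: fact_eq)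
  also have "\<dots> \<le> fact j * (\<Sum>T\<in>\<T>. \<Sum>\<sigma> | \<sigma> permutes (S - T). h \<sigma>)"
    using sum_mono[OF inner] by (intro mult_left_mono) simp_all
  also have "\<dots> = fact j * (\<Sum>\<sigma> | \<sigma> permutes S. card {T\<in>\<T>. \<forall>t\<in>T. \<sigma> t = t} * h \<sigma>)"
    by (subst sum_permutes_card_fixed_subsets[OF fin_S]) (auto simp: \<T>_def)
  also have "\<dots> = (\<Sum>\<sigma> | \<sigma> permutes S.
                 fact j * real ((card {a\<in>A. \<sigma> a = a} - card B) choose j) * h \<sigma>)"
    using choose_eq by (simp add: sum_distrib_left mult.assoc)
  finally show ?thesis
    by (simp add: S_def h_def pos_le_divide_eq mult.commute)
qed

lemma fact_mult_choose_eq_prod_diff: "fact k * (n choose k) = (\<Prod>i<k. n - i)"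
proof (induction k arbitrary: n)
  case 0
  show ?case by simp
next
  case (Suc k)
  show ?case
  proof (cases n)
    case 0
    then show ?thesis by (simp add: prod.lessThan_Suc_shift)
  next
    case (Suc n')
    have "fact (Suc k) * (n choose Suc k) = Suc n' * (fact k * (n' choose k))"
      using Suc Suc_times_binomial_eq[of n' k] by (simp add: algebra_simps del: binomial_Suc_Suc)
    moreover have "(\<Prod>i<Suc k. n - i) = Suc n' * (\<Prod>i<k. n' - i)"
      unfolding prod.lessThan_Suc_shift using Suc by simp
    ultimately show ?thesis using Suc.IH by (simp del: binomial_Suc_Suc)
  qed
qed

lemma card_inj_funcset:
  assumes "finite A" "finite C"
  shows "card {f \<in> A \<rightarrow>\<^sub>E C. inj_on f A} = fact (card A) * (card C choose card A)"
  using card_inj_on_subset_funcset[OF assms(1,2) order_refl]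
  by (simp add: fact_mult_choose_eq_prod_diff atLeast0LessThan)

lemma mult_fact_choose_le_fact_choose:
  fixes m b c :: nat
  assumes "1 \<le> b" "b \<le> m" "1 \<le> c"
  shows "m * fact (c - b) * ((m - b) choose (c - b)) \<le> fact c * (m choose c)"
proof (cases "c \<le> m")
  case True
  have "fact (c - b) * ((m - b) choose (c - b)) * fact (m - c) \<le> fact (m - 1)"
  proof (cases "c \<le> b")
    case True
    then show ?thesis using assms by (simp add: fact_mono)
  next
    case False
    then have "fact (c - b) * ((m - b) choose (c - b)) * fact (m - c) = fact (m - b)"
      using binomial_fact_lemma[of "c - b" "m - b"] \<open>c \<le> m\<close> by (simp add: mult_ac)
    then show ?thesis using assms by (simp add: fact_mono)
  qed
  then have "m * fact (c - b) * ((m - b) choose (c - b)) * fact (m - c) \<le> m * fact (m - 1)"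
    by (simp add: mult.assoc)
  also have "\<dots> = fact m"
    using assms by (cases m) auto
  also have "\<dots> = fact c * (m choose c) * fact (m - c)"
    using binomial_fact_lemma[OF True] by (simp add: mult_ac)
  finally show ?thesis by simp
next
  case False
  then have "m - b < c - b" using assms by linarith
  then show ?thesis by (simp add: binomial_eq_0)
qed

definition block :: "'a set set \<Rightarrow> 'a \<Rightarrow> 'a set" where
  "block P i = (THE X. X \<in> P \<and> i \<in> X)"

lemma block_eq:
  assumes "partition_on I P" "X \<in> P" "i \<in> X"
  shows "block P i = X"
  unfolding block_def
proof (rule the_equality)
  show "X \<in> P \<and> i \<in> X" using assms by blast
  fix Y assume "Y \<in> P \<and> i \<in> Y"
  then show "Y = X" using assms partition_onD2[OF assms(1)] unfolding disjoint_def by blast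
qed

lemma block_in_partition:
  assumes "partition_on I P" "i \<in> I"
  shows "block P i \<in> P" and "i \<in> block P i"
proof -
  obtain X where "X \<in> P" "i \<in> X" using partition_onD1[OF assms(1)] assms(2) by blast
  then show "block P i \<in> P" "i \<in> block P i" using block_eq[OF assms(1)] by auto
qed

lemma block_subset:
  assumes "partition_on I P" "i \<in> I"
  shows "block P i \<subseteq> I"
  using block_in_partition[OF assms] partition_onD1[OF assms(1)] by blast

lemma image_block_eq:
  assumes "partition_on I P"
  shows "block P ` I = P"
proof
  show "block P ` I \<subseteq> P" using block_in_partition(1)[OF assms] by blast
  show "P \<subseteq> block P ` I"
  proof
    fix X assume X: "X \<in> P"
    then obtain i where "i \<in> X" using partition_onD3[OF assms] by (metis all_not_in_conv)
    then show "X \<in> block P ` I" using X block_eq[OF assms X] partition_onD1[OF assms] by blast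
  qed
qed

lemma card_partition_on_le:
  assumes "finite I" "partition_on I P"
  shows "card P \<le> card I"
  using card_image_le[OF assms(1), of "block P"] image_block_eq[OF assms(2)] by simp

definition label_blocks :: "nat \<Rightarrow> nat set set \<Rightarrow> (nat set \<Rightarrow> nat) \<Rightarrow> nat \<Rightarrow> nat" where
  "label_blocks n P g = restrict (\<lambda>i. g (block P i)) {0..<n}"

lemma label_blocks_in_vecs:
  assumes "partition_on {0..<n} P" "g \<in> P \<rightarrow> F" "F \<subseteq> {0..<k}"
  shows "label_blocks n P g \<in> vecs k n" and "\<forall>i\<in>{0..<n}. label_blocks n P g i \<in> F"
  using assms block_in_partition(1)[OF assms(1)] by (auto simp: label_blocks_def vecs_def)

lemma part_of_label_blocks:
  assumes P: "partition_on {0..<n} P" and "inj_on g P"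
  shows "part_of n (label_blocks n P g) = P"
proof -
  have "{j \<in> {0..<n}. label_blocks n P g j = label_blocks n P g i} = block P i"
    if i: "i \<in> {0..<n}" for i
  proof -
    have "{j \<in> {0..<n}. label_blocks n P g j = label_blocks n P g i}
        = {j \<in> {0..<n}. block P j = block P i}"
      using i block_in_partition(1)[OF P] inj_onD[OF assms(2)] by (auto simp: label_blocks_def)
    also have "\<dots> = block P i"
    proof (intro set_eqI iffI)
      fix j assume "j \<in> {j \<in> {0..<n}. block P j = block P i}"
      then show "j \<in> block P i" using block_in_partition(2)[OF P] by force
    next
      fix j assume "j \<in> block P i"
      then show "j \<in> {j \<in> {0..<n}. block P j = block P i}"
        using block_eq[OF P block_in_partition(1)[OF P i]] block_subset[OF P i] by auto
    qed
    finally show ?thesis .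
  qed
  then have "part_of n (label_blocks n P g) = block P ` {0..<n}"
    unfolding part_of_def by (intro image_cong) auto
  then show ?thesis using image_block_eq[OF P] by simp
qed

lemma inj_on_label_blocks:
  assumes P: "partition_on {0..<n} P"
  shows "inj_on (label_blocks n P) (P \<rightarrow>\<^sub>E F)"
proof (rule inj_onI)
  fix g h assume g: "g \<in> P \<rightarrow>\<^sub>E F" and h: "h \<in> P \<rightarrow>\<^sub>E F"
    and eq: "label_blocks n P g = label_blocks n P h"
  have "g \<in> extensional P" "h \<in> extensional P" using g h by (simp_all add: PiE_iff)
  then show "g = h"
  proof (rule extensionalityI)
    fix X assume X: "X \<in> P"
    then obtain i where i: "i \<in> X" using partition_onD3[OF P] by (metis all_not_in_conv)
    then have "i \<in> {0..<n}" using X partition_onD1[OF P] by blast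
    then show "g X = h X"
      using fun_cong[OF eq, of i] block_eq[OF P X i] by (simp add: label_blocks_def)
  qed
qed

lemma ex_vecs_part_of:
  assumes "partition_on {0..<n} P" "n \<le> k"
  shows "\<exists>u. u \<in> vecs k n \<and> part_of n u = P"
proof -
  have "finite P" using finite_elements[OF _ assms(1)] by simp
  moreover have "card P \<le> card {0..<k}" using card_partition_on_le[OF _ assms(1)] assms(2) by simp
  ultimately obtain g where "g ` P \<subseteq> {0..<k}" "inj_on g P"
    using card_le_inj[of P "{0..<k}"] by auto
  then have "label_blocks n P g \<in> vecs k n"
    using label_blocks_in_vecs(1)[OF assms(1) _ order_refl] by (simp add: image_subset_iff_funcset)
  then show ?thesis using part_of_label_blocks[OF assms(1) \<open>inj_on g P\<close>] by blast
qed

lemma finite_vecs: "finite (vecs k n)"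
  by (simp add: vecs_def finite_PiE)

lemma card_vecs_part_of_within_ge:
  assumes P: "partition_on {0..<n} P" and F: "F \<subseteq> {0..<k}"
  shows "fact (card P) * (card F choose card P)
           \<le> card {w \<in> vecs k n. part_of n w = P \<and> (\<forall>i\<in>{0..<n}. w i \<in> F)}"
proof -
  have "finite F" using F finite_subset by blast
  moreover have "finite P" using finite_elements[OF _ P] by simp
  ultimately have "fact (card P) * (card F choose card P) = card {g \<in> P \<rightarrow>\<^sub>E F. inj_on g P}"
    by (simp add: card_inj_funcset)
  also have "\<dots> \<le> card {w \<in> vecs k n. part_of n w = P \<and> (\<forall>i\<in>{0..<n}. w i \<in> F)}"
  proof (rule card_inj_on_le)
    show "inj_on (label_blocks n P) {g \<in> P \<rightarrow>\<^sub>E F. inj_on g P}"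
      using inj_on_label_blocks[OF P] by (rule inj_on_subset) blast
    show "label_blocks n P ` {g \<in> P \<rightarrow>\<^sub>E F. inj_on g P}
        \<subseteq> {w \<in> vecs k n. part_of n w = P \<and> (\<forall>i\<in>{0..<n}. w i \<in> F)}"
      using label_blocks_in_vecs[OF P _ F] part_of_label_blocks[OF P] by (auto simp: PiE_iff)
    show "finite {w \<in> vecs k n. part_of n w = P \<and> (\<forall>i\<in>{0..<n}. w i \<in> F)}"
      using finite_vecs by simp
  qed
  finally show ?thesis .
qed

lemma choose_div_power_le_card_vecs_part_of_within:
  assumes y: "partition_on {0..<n} y" "1 \<le> n" and F: "F \<subseteq> {0..<k}" and b: "1 \<le> b" "b \<le> card F"
  shows "fact (card y - b) * real ((card F - b) choose (card y - b)) / real (card F) ^ (n - 1)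
           \<le> card {w \<in> vecs k n. part_of n w = y \<and> (\<forall>i\<in>{0..<n}. w i \<in> F)} / real (card F) ^ n"
proof -
  define m where "m = card F"
  define count where "count = card {w \<in> vecs k n. part_of n w = y \<and> (\<forall>i\<in>{0..<n}. w i \<in> F)}"
  have "y \<noteq> {}" using partition_onD1[OF y(1)] y(2) by auto
  then have "1 \<le> card y"
    using finite_elements[OF _ y(1)] by (simp add: Suc_le_eq card_gt_0_iff)
  then have "m * fact (card y - b) * ((m - b) choose (card y - b)) \<le> fact (card y) * (m choose card y)"
    using mult_fact_choose_le_fact_choose b by (simp add: m_def)
  also have "\<dots> \<le> count"
    using card_vecs_part_of_within_ge[OF y(1) F] by (simp add: count_def m_def)
  finally have "real (m * fact (card y - b) * ((m - b) choose (card y - b))) \<le> count"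
    by (simp only: of_nat_le_iff)
  then have count_ge: "real m * (fact (card y - b) * real ((m - b) choose (card y - b))) \<le> count"
    by (simp add: mult.assoc)
  have "real m ^ n = real m * real m ^ (n - 1)"
    using y(2) by (cases n) simp_all
  then have "fact (card y - b) * real ((m - b) choose (card y - b)) / real m ^ (n - 1)
      = real m * (fact (card y - b) * real ((m - b) choose (card y - b))) / real m ^ n"
    using b by (simp add: m_def)
  also have "\<dots> \<le> count / real m ^ n"
    using count_ge by (rule divide_right_mono) simp
  finally show ?thesis by (simp add: m_def count_def)
qed

lemma fixpts_subset: "fixpts k \<sigma> \<subseteq> {0..<k}"
  by (auto simp: fixpts_def)

lemma stab_eq_permutes_compl:
  assumes "u \<in> vecs k n"
  shows "stab k n u = {\<sigma>. \<sigma> permutes {0..<k} - u ` {0..<n}}"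
proof -
  have "u ` {0..<n} \<subseteq> {0..<k}" using assms by (auto simp: vecs_def)
  then show ?thesis
    using permutes_fixing_eq[of "u ` {0..<n}" "{0..<k}"] by (simp add: stab_def)
qed

lemma sum_burnside_K_eq:
  assumes "finite W"
  shows "(\<Sum>w\<in>W. burnside_K k n u w)
           = (\<Sum>\<sigma>\<in>stab k n u. card {w\<in>W. \<forall>i\<in>{0..<n}. w i \<in> fixpts k \<sigma>}
                 / real (card (fixpts k \<sigma>)) ^ n) / card (stab k n u)"
proof -
  have prod_eq: "(\<Prod>i\<in>{0..<n}. if w i \<in> F then 1 / real (card F) else 0)
      = (if \<forall>i\<in>{0..<n}. w i \<in> F then 1 / real (card F) ^ n else 0)" for w and F :: "nat set"
    by (auto simp: power_one_over)
  have "(\<Sum>w\<in>W. burnside_K k n u w)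
      = (\<Sum>\<sigma>\<in>stab k n u. \<Sum>w\<in>W. if \<forall>i\<in>{0..<n}. w i \<in> fixpts k \<sigma>
           then 1 / real (card (fixpts k \<sigma>)) ^ n else 0) / card (stab k n u)"
    unfolding burnside_K_def prod_eq
    by (subst sum.swap) (simp add: sum_divide_distrib)
  also have "\<dots> = (\<Sum>\<sigma>\<in>stab k n u. card {w\<in>W. \<forall>i\<in>{0..<n}. w i \<in> fixpts k \<sigma>}
                 / real (card (fixpts k \<sigma>)) ^ n) / card (stab k n u)"
    using assms by (simp add: sum.If_cases Int_def)
  finally show ?thesis .
qed

lemma sum_burnside_K_part_of_ge:
  assumes u: "u \<in> vecs k n" and y: "partition_on {0..<n} y" and "1 \<le> n" "n \<le> k"
  shows "1 / real (max (card (u ` {0..<n})) (card y) + 1) ^ (n - 1)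
           \<le> (\<Sum>w\<in>{w \<in> vecs k n. part_of n w = y}. burnside_K k n u w)"
proof -
  define A where "A = {0..<k :: nat}"
  define B where "B = u ` {0..<n}"
  define j where "j = card y - card B"
  define count where "count = (\<lambda>\<sigma>. card {w\<in>{w \<in> vecs k n. part_of n w = y}.
                                        \<forall>i\<in>{0..<n}. w i \<in> fixpts k \<sigma>})"
  have B: "B \<subseteq> A" "B \<noteq> {}"
    using u assms(3) by (auto simp: A_def B_def vecs_def)
  have "card y \<le> n" using card_partition_on_le[OF _ y] by simp
  have fin_A: "finite A" by (simp add: A_def)
  then have "1 \<le> card B"
    using B(1,2) by (simp add: Suc_le_eq card_gt_0_iff finite_subset)
  have j: "j \<le> card (A - B)"
    using B \<open>card y \<le> n\<close> assms(4) by (simp add: j_def A_def card_Diff_subset finite_subset)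
  have stab: "stab k n u = {\<sigma>. \<sigma> permutes A - B}"
    using stab_eq_permutes_compl[OF u] by (simp add: A_def B_def)
  have per_perm: "fact j * real ((card (fixpts k \<sigma>) - card B) choose j) / real (card (fixpts k \<sigma>)) ^ (n - 1)
      \<le> count \<sigma> / real (card (fixpts k \<sigma>)) ^ n" if "\<sigma> permutes A - B" for \<sigma>
  proof -
    have "B \<subseteq> fixpts k \<sigma>"
      using B(1) permutes_not_in[OF that] by (auto simp: fixpts_def A_def)
    then have "card B \<le> card (fixpts k \<sigma>)"
      using card_mono[OF _ \<open>B \<subseteq> fixpts k \<sigma>\<close>] by (simp add: fixpts_def)
    then show ?thesis
      using choose_div_power_le_card_vecs_part_of_within[OF y assms(3) fixpts_subset \<open>1 \<le> card B\<close>]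
      by (simp add: j_def count_def conj_assoc)
  qed
  have "1 / real (max (card B) (card y) + 1) ^ (n - 1) = 1 / real (card B + j + 1) ^ (n - 1)"
    by (simp add: j_def max_def)
  also have "\<dots> \<le> (\<Sum>\<sigma> | \<sigma> permutes (A - B). fact j * real ((card (fixpts k \<sigma>) - card B) choose j)
                   / real (card (fixpts k \<sigma>)) ^ (n - 1)) / fact (card (A - B))"
    using permutes_average_choose_fixpoints_ge[OF fin_A B(1,2) j, of "n - 1"]
    by (simp add: fixpts_def A_def)
  also have "\<dots> \<le> (\<Sum>\<sigma> | \<sigma> permutes (A - B). count \<sigma> / real (card (fixpts k \<sigma>)) ^ n) / fact (card (A - B))"
    using per_perm by (intro divide_right_mono sum_mono) auto
  also have "\<dots> = (\<Sum>w\<in>{w \<in> vecs k n. part_of n w = y}. burnside_K k n u w)"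
    using fin_A card_permutations[of "A - B"] finite_vecs[of k n]
    by (simp add: sum_burnside_K_eq stab count_def)
  finally show ?thesis by (simp add: B_def)
qed

theorem lemma5p1:
  fixes k n :: nat
  assumes "1 \<le> n" and "n \<le> k"
  shows "\<forall>x\<in>setparts n. \<forall>y\<in>setparts n.
           burnside_Kbar k n x y \<ge> 1 / real (n + 1) ^ (n - 1)"
proof (intro ballI)
  fix x y assume "x \<in> setparts n" "y \<in> setparts n"
  then have x: "partition_on {0..<n} x" and y: "partition_on {0..<n} y"
    by (auto simp: setparts_def)
  define u where "u = (SOME u. u \<in> vecs k n \<and> part_of n u = x)"
  have u: "u \<in> vecs k n"
    using someI_ex[OF ex_vecs_part_of[OF x assms(2)]] by (simp add: u_def)
  have "max (card (u ` {0..<n})) (card y) \<le> n"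
    using card_image_le[of "{0..<n}" u] card_partition_on_le[OF _ y] by simp
  then have "1 / real (n + 1) ^ (n - 1) \<le> 1 / real (max (card (u ` {0..<n})) (card y) + 1) ^ (n - 1)"
    by (intro divide_left_mono power_mono) auto
  also have "\<dots> \<le> burnside_Kbar k n x y"
    using sum_burnside_K_part_of_ge[OF u y assms] by (simp add: burnside_Kbar_def u_def)
  finally show "burnside_Kbar k n x y \<ge> 1 / real (n + 1) ^ (n - 1)" .
qed

end
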